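(* Let $N_{D\Lambda}$ be the smallest positive integer $N$ such that $N(x,x)\in2\mathbb Z$ for all $x\in\Lambda^\vee$, and $N'_{D\Lambda}$ the smallest positive integer $N$ with $Nx\in\Lambda$ for all $x\in\Lambda^\vee$ (the exponent of $G_\Lambda$). Then $N_{D\Lambda}=D_zf_\rho$, and $N'_{D\Lambda}=N_{D\Lambda}$ if $b_z$ is odd, while $N'_{D\Lambda}=N_{D\Lambda}/2$ if $b_z$ is even.
   Context: Let $z\in\mathcal H$ with $a_zz^2+b_zz+c_z=0$ for coprime integers $a_z>0,b_z,c_z$, $D_z=4a_zc_z-b_z^2>0$, and $f_\rho$ a positive integer. $\Lambda$ is the lattice with basis $e_2,e_1$ and Gram matrix $f_\rho\begin{pmatrix}2a_z&b_z\\ b_z&2c_z\end{pmatrix}$, with the bilinear form extended $\mathbb Q$-linearly; $\Lambda^\vee\subset\Lambda\otimes\mathbb Q$ is its dual lattice and $G_\Lambda=\Lambda^\vee/\Lambda$. *)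

theory Defs
  imports Complex_Main
begin

text \<open>Elements of \<Lambda> \<otimes> \<rat> are written as pairs (x1, x2) of rationals, meaning
  x1 e2 + x2 e1 in the basis e2, e1 of \<Lambda>.\<close>

definition bil :: "int \<Rightarrow> int \<Rightarrow> int \<Rightarrow> int \<Rightarrow> rat \<times> rat \<Rightarrow> rat \<times> rat \<Rightarrow> rat" where
  "bil a b c f x y = of_int f * (2 * of_int a * fst x * fst y
      + of_int b * (fst x * snd y + snd x * fst y) + 2 * of_int c * snd x * snd y)"

definition lattice :: "(rat \<times> rat) set" where
  "lattice = {x. fst x \<in> \<int> \<and> snd x \<in> \<int>}"

definition dual_lattice :: "int \<Rightarrow> int \<Rightarrow> int \<Rightarrow> int \<Rightarrow> (rat \<times> rat) set" where
  "dual_lattice a b c f = {x. \<forall>y\<in>lattice. bil a b c f x y \<in> \<int>}"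

definition scaleQ :: "rat \<Rightarrow> rat \<times> rat \<Rightarrow> rat \<times> rat" where
  "scaleQ t x = (t * fst x, t * snd x)"

definition level :: "int \<Rightarrow> int \<Rightarrow> int \<Rightarrow> int \<Rightarrow> nat" where
  "level a b c f = (LEAST N::nat. 0 < N \<and>
     (\<forall>x\<in>dual_lattice a b c f. \<exists>k::int. of_nat N * bil a b c f x x = 2 * of_int k))"

definition exponent_disc :: "int \<Rightarrow> int \<Rightarrow> int \<Rightarrow> int \<Rightarrow> nat" where
  "exponent_disc a b c f = (LEAST N::nat. 0 < N \<and>
     (\<forall>x\<in>dual_lattice a b c f. scaleQ (of_nat N) x \<in> lattice))"

end

theory Submission
  imports Defs
begin

text \<open>Write \<open>G = f [[2a, b], [b, 2c]]\<close> for the Gram matrix and \<open>M = f (4ac - b\<^sup>2)\<close>, so that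
  \<open>G\<^sup>-\<^sup>1 = M\<^sup>-\<^sup>1 [[2c, -b], [-b, 2a]]\<close>. The dual lattice is \<open>G\<^sup>-\<^sup>1 \<int>\<^sup>2\<close>, i.e. it consists of the
  vectors \<open>x = M\<^sup>-\<^sup>1 (2cu - bv, 2av - bu)\<close> with \<open>u, v \<in> \<int>\<close>. For these
  \<open>(x, x) = 2 (cu\<^sup>2 - buv + av\<^sup>2) / M\<close>, and \<open>N x \<in> \<Lambda>\<close> iff \<open>M\<close> divides both
  \<open>N (2cu - bv)\<close> and \<open>N (2av - bu)\<close>. Evaluating at \<open>(u, v) = (1, 0), (0, 1), (1, 1)\<close> and using
  \<open>gcd(a, b, c) = 1\<close>, the first condition holds for all \<open>u, v\<close> iff \<open>M | N\<close>, the second iff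
  \<open>M | N gcd(2, b)\<close>; finally \<open>gcd(2, b)\<close> divides \<open>M\<close>.\<close>

lemma bil_right_coords:
  "bil a b c f x y = fst y * bil a b c f x (1, 0) + snd y * bil a b c f x (0, 1)"
  unfolding bil_def by (simp add: algebra_simps)

lemma bil_unit_fst: "bil a b c f x (1, 0) = of_int f * (2 * of_int a * fst x + of_int b * snd x)"
  unfolding bil_def by (simp add: algebra_simps)

lemma bil_unit_snd: "bil a b c f x (0, 1) = of_int f * (of_int b * fst x + 2 * of_int c * snd x)"
  unfolding bil_def by (simp add: algebra_simps)

lemma mem_dual_lattice_iff:
  "x \<in> dual_lattice a b c f \<longleftrightarrow> bil a b c f x (1, 0) \<in> \<int> \<and> bil a b c f x (0, 1) \<in> \<int>"
proof
  assume basis: "bil a b c f x (1, 0) \<in> \<int> \<and> bil a b c f x (0, 1) \<in> \<int>"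
  have "bil a b c f x y \<in> \<int>" if "y \<in> lattice" for y
    using basis that unfolding bil_right_coords[of _ _ _ _ x y] lattice_def
    by (auto intro: Ints_add Ints_mult)
  then show "x \<in> dual_lattice a b c f"
    unfolding dual_lattice_def by blast
qed (simp add: dual_lattice_def lattice_def)

text \<open>\<open>dual_vector a b c f u v = G\<^sup>-\<^sup>1 (u, v)\<close>.\<close>

definition dual_vector :: "int \<Rightarrow> int \<Rightarrow> int \<Rightarrow> int \<Rightarrow> int \<Rightarrow> int \<Rightarrow> rat \<times> rat" where
  "dual_vector a b c f u v =
    (of_int (2 * c * u - b * v) / of_int (f * (4 * a * c - b\<^sup>2)),
     of_int (2 * a * v - b * u) / of_int (f * (4 * a * c - b\<^sup>2)))"

lemma bil_dual_vector:
  assumes "f * (4 * a * c - b\<^sup>2) \<noteq> 0"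
  shows "bil a b c f (dual_vector a b c f u v) (1, 0) = of_int u"
    and "bil a b c f (dual_vector a b c f u v) (0, 1) = of_int v"
proof -
  define M :: rat where "M = of_int (f * (4 * a * c - b\<^sup>2))"
  have "M \<noteq> 0"
    using assms unfolding M_def of_int_eq_0_iff .
  then have "bil a b c f (dual_vector a b c f u v) (1, 0) * M = of_int u * M"
    and "bil a b c f (dual_vector a b c f u v) (0, 1) * M = of_int v * M"
    unfolding bil_unit_fst bil_unit_snd dual_vector_def M_def[symmetric]
    by (simp_all add: field_simps) (simp_all add: M_def algebra_simps power2_eq_square)
  with \<open>M \<noteq> 0\<close> show "bil a b c f (dual_vector a b c f u v) (1, 0) = of_int u"
    and "bil a b c f (dual_vector a b c f u v) (0, 1) = of_int v"
    by simp_all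
qed

lemma dual_lattice_eq:
  assumes "f * (4 * a * c - b\<^sup>2) \<noteq> 0"
  shows "dual_lattice a b c f = {dual_vector a b c f u v | u v. True}"
proof (intro set_eqI iffI)
  fix x
  assume "x \<in> dual_lattice a b c f"
  then obtain u v where u: "bil a b c f x (1, 0) = of_int u" and v: "bil a b c f x (0, 1) = of_int v"
    unfolding mem_dual_lattice_iff by (auto elim!: Ints_cases)
  define M :: rat where "M = of_int (f * (4 * a * c - b\<^sup>2))"
  have "M \<noteq> 0"
    using assms unfolding M_def of_int_eq_0_iff .
  moreover have "fst x * M = of_int (2 * c * u - b * v)" "snd x * M = of_int (2 * a * v - b * u)"
    unfolding of_int_diff of_int_mult u[symmetric] v[symmetric] bil_unit_fst bil_unit_snd M_def
    by (simp_all add: algebra_simps power2_eq_square)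
  ultimately have "x = dual_vector a b c f u v"
    unfolding dual_vector_def M_def[symmetric] by (simp add: prod_eq_iff eq_divide_eq)
  then show "x \<in> {dual_vector a b c f u v | u v. True}"
    by blast
qed (auto simp: mem_dual_lattice_iff bil_dual_vector[OF assms])

lemma ball_dual_lattice_iff:
  assumes "f * (4 * a * c - b\<^sup>2) \<noteq> 0"
  shows "(\<forall>x\<in>dual_lattice a b c f. P x) \<longleftrightarrow> (\<forall>u v. P (dual_vector a b c f u v))"
  unfolding dual_lattice_eq[OF assms] by blast

lemma bil_dual_vector_self:
  assumes "f * (4 * a * c - b\<^sup>2) \<noteq> 0"
  shows "bil a b c f (dual_vector a b c f u v) (dual_vector a b c f u v)
    = 2 * (of_int (c * u\<^sup>2 - b * u * v + a * v\<^sup>2) / of_int (f * (4 * a * c - b\<^sup>2)))"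
proof -
  have "bil a b c f (dual_vector a b c f u v) (dual_vector a b c f u v)
      = of_int ((2 * c * u - b * v) * u + (2 * a * v - b * u) * v) / of_int (f * (4 * a * c - b\<^sup>2))"
    unfolding bil_right_coords[of _ _ _ _ _ "dual_vector a b c f u v"] bil_dual_vector[OF assms]
    by (simp add: dual_vector_def add_divide_distrib)
  also have "(2 * c * u - b * v) * u + (2 * a * v - b * u) * v = 2 * (c * u\<^sup>2 - b * u * v + a * v\<^sup>2)"
    by (simp add: algebra_simps power2_eq_square)
  finally show ?thesis
    by simp
qed

lemma of_nat_mult_of_int_div_in_Ints_iff:
  assumes "d \<noteq> 0"
  shows "(of_nat N * (of_int m / of_int d) :: rat) \<in> \<int> \<longleftrightarrow> d dvd int N * m"
proof -
  have "(of_nat N * (of_int m / of_int d) :: rat) = of_int (int N * m) / of_int d"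
    by simp
  then show ?thesis
    using assms by (simp only: of_int_div_of_int_in_Ints_iff) simp
qed

lemma even_multiple_dual_norm_iff:
  assumes "f * (4 * a * c - b\<^sup>2) \<noteq> 0"
  shows "(\<forall>x\<in>dual_lattice a b c f. \<exists>k::int. of_nat N * bil a b c f x x = 2 * of_int k)
    \<longleftrightarrow> (\<forall>u v. f * (4 * a * c - b\<^sup>2) dvd int N * (c * u\<^sup>2 - b * u * v + a * v\<^sup>2))"
proof -
  have even_iff: "(\<exists>k::int. 2 * q = 2 * of_int k) \<longleftrightarrow> q \<in> \<int>" for q :: rat
    by (auto elim: Ints_cases)
  show ?thesis
    unfolding ball_dual_lattice_iff[OF assms] bil_dual_vector_self[OF assms] mult.left_commute[of "of_nat N"]
      even_iff of_nat_mult_of_int_div_in_Ints_iff[OF assms]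
    by blast
qed

lemma scaleQ_dual_lattice_subset_iff:
  assumes "f * (4 * a * c - b\<^sup>2) \<noteq> 0"
  shows "(\<forall>x\<in>dual_lattice a b c f. scaleQ (of_nat N) x \<in> lattice)
    \<longleftrightarrow> (\<forall>u v. f * (4 * a * c - b\<^sup>2) dvd int N * (2 * c * u - b * v)
             \<and> f * (4 * a * c - b\<^sup>2) dvd int N * (2 * a * v - b * u))"
  unfolding ball_dual_lattice_iff[OF assms] scaleQ_def lattice_def dual_vector_def mem_Collect_eq
    fst_conv snd_conv of_nat_mult_of_int_div_in_Ints_iff[OF assms]
  by blast

lemma dvd_mult_gcd3:
  fixes m n a b c :: "'a :: semiring_gcd"
  assumes "m dvd n * a" "m dvd n * b" "m dvd n * c"
  shows "m dvd n * gcd (gcd a b) c"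
proof -
  have "m dvd n * gcd a b"
    using assms(1,2) gcd_greatest[of m "n * a" "n * b"] by (simp add: gcd_mult_left)
  with assms(3) show ?thesis
    using gcd_greatest[of m "n * gcd a b" "n * c"] by (simp add: gcd_mult_left)
qed

lemma quadratic_form_values_dvd_iff:
  fixes m n a b c :: int
  assumes "gcd (gcd a b) c = 1"
  shows "(\<forall>u v. m dvd n * (c * u\<^sup>2 - b * u * v + a * v\<^sup>2)) \<longleftrightarrow> m dvd n"
proof
  assume dvd_values: "\<forall>u v. m dvd n * (c * u\<^sup>2 - b * u * v + a * v\<^sup>2)"
  have c: "m dvd n * c" and a: "m dvd n * a" and abc: "m dvd n * (c - b + a)"
    using dvd_values[rule_format, of 1 0] dvd_values[rule_format, of 0 1] dvd_values[rule_format, of 1 1]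
    by simp_all
  have "n * b = n * c + n * a - n * (c - b + a)"
    by (simp add: algebra_simps)
  with a c abc have "m dvd n * b"
    by (metis dvd_add dvd_diff)
  with a c show "m dvd n"
    using dvd_mult_gcd3[of m n a b c] assms by simp
qed simp

lemma linear_forms_dvd_iff:
  fixes m n a b c :: int
  assumes "gcd (gcd a b) c = 1"
  shows "(\<forall>u v. m dvd n * (2 * c * u - b * v) \<and> m dvd n * (2 * a * v - b * u))
    \<longleftrightarrow> m dvd n * gcd 2 b"
proof
  assume forms: "\<forall>u v. m dvd n * (2 * c * u - b * v) \<and> m dvd n * (2 * a * v - b * u)"
  have c: "m dvd (2 * n) * c" and b: "m dvd n * b" and a: "m dvd (2 * n) * a"
    using forms[rule_format, of 1 0] forms[rule_format, of 0 1] by (simp_all add: ac_simps)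
  moreover from b have "m dvd (2 * n) * b"
    using dvd_mult2[of m "n * b" 2] by (simp add: ac_simps)
  ultimately have "m dvd 2 * n"
    using dvd_mult_gcd3[of m "2 * n" a b c] assms by simp
  with b have "m dvd gcd (n * 2) (n * b)"
    by (simp add: ac_simps)
  then show "m dvd n * gcd 2 b"
    by (simp add: gcd_mult_left)
next
  assume "m dvd n * gcd 2 b"
  moreover have "gcd 2 b dvd 2 * c * u - b * v" "gcd 2 b dvd 2 * a * v - b * u" for u v
    by simp_all
  ultimately show "\<forall>u v. m dvd n * (2 * c * u - b * v) \<and> m dvd n * (2 * a * v - b * u)"
    by (meson dvd_trans mult_dvd_mono dvd_refl)
qed

lemma Least_positive_dvd_eq:
  fixes m :: int
  assumes "0 < m"
  shows "(LEAST N :: nat. 0 < N \<and> m dvd int N) = nat m"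
proof (rule Least_equality)
  show "0 < nat m \<and> m dvd int (nat m)"
    using assms by simp
next
  fix N :: nat
  assume "0 < N \<and> m dvd int N"
  then show "nat m \<le> N"
    using assms by (simp add: zdvd_imp_le nat_le_iff)
qed

lemma level_eq:
  assumes "gcd (gcd a b) c = 1" and "0 < f * (4 * a * c - b\<^sup>2)"
  shows "level a b c f = nat (f * (4 * a * c - b\<^sup>2))"
proof -
  have M_ne: "f * (4 * a * c - b\<^sup>2) \<noteq> 0"
    using assms(2) by linarith
  show ?thesis
    unfolding level_def even_multiple_dual_norm_iff[OF M_ne] quadratic_form_values_dvd_iff[OF assms(1)]
    using Least_positive_dvd_eq[OF assms(2)] by simp
qed

lemma exponent_disc_eq:
  assumes "gcd (gcd a b) c = 1" and "0 < f * (4 * a * c - b\<^sup>2)"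
  shows "exponent_disc a b c f = nat (f * (4 * a * c - b\<^sup>2) div gcd 2 b)"
proof -
  let ?M = "f * (4 * a * c - b\<^sup>2)"
  have "gcd 2 b dvd 4 * a * c" "gcd 2 b dvd b\<^sup>2"
    using dvd_trans[OF gcd_dvd1[of 2 b], of "4 * a * c"] dvd_trans[OF gcd_dvd2[of 2 b], of "b\<^sup>2"]
    by simp_all
  then have "gcd 2 b dvd 4 * a * c - b\<^sup>2"
    by (rule dvd_diff)
  then have g_dvd_M: "gcd 2 b dvd ?M"
    by (rule dvd_mult)
  then have "?M dvd int N * gcd 2 b \<longleftrightarrow> ?M div gcd 2 b dvd int N" for N
    by (simp add: div_dvd_iff_mult)
  moreover have "0 < ?M div gcd 2 b"
    using assms(2) g_dvd_M by (auto simp: pos_imp_zdiv_pos_iff zdvd_imp_le)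
  moreover have "?M \<noteq> 0"
    using assms(2) by linarith
  ultimately show ?thesis
    unfolding exponent_disc_def scaleQ_dual_lattice_subset_iff[OF \<open>?M \<noteq> 0\<close>]
      linear_forms_dvd_iff[OF assms(1)]
    using Least_positive_dvd_eq by simp
qed

theorem lemma2p4p3:
  fixes z :: complex and a b c f :: int
  assumes hz: "Im z > 0"
    and hroot: "of_int a * z^2 + of_int b * z + of_int c = 0"
    and ha: "a > 0"
    and hcop: "gcd (gcd a b) c = 1"
    and hD: "4 * a * c - b^2 > 0"
    and hf: "f > 0"
  shows "int (level a b c f) = (4 * a * c - b^2) * f
    \<and> (odd b \<longrightarrow> exponent_disc a b c f = level a b c f)
    \<and> (even b \<longrightarrow> exponent_disc a b c f = level a b c f div 2)"
proof -
  have M_pos: "0 < f * (4 * a * c - b\<^sup>2)"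
    using hD hf by simp
  note level = level_eq[OF hcop M_pos] and exponent = exponent_disc_eq[OF hcop M_pos]
  show ?thesis
  proof (intro conjI impI)
    show "int (level a b c f) = (4 * a * c - b^2) * f"
      using level M_pos by simp
    show "exponent_disc a b c f = level a b c f" if "odd b"
      using that level exponent by (simp add: gcd.commute[of 2] odd_iff_mod_2_eq_one)
    show "exponent_disc a b c f = level a b c f div 2" if "even b"
      using that level exponent M_pos by (simp add: nat_div_distrib)
  qed
qed

end
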